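(* Let $0<\omega_1<\omega_2<\cdots$, $(c_j)$ a real square-summable sequence with all $c_j\ne0$, $\gamma>0$, and let $A$ be the operator on $H=\ell^2\times\ell^2$ (complex) given by $A(q,p)=(-i\Omega q+\check Aq+\check Ap,\ \check Aq+i\Omega p+\check Ap)$ with $\Omega=\mathrm{diag}(\omega_j)$, $(\check Ax)_j=-\frac\gamma2c_j\sum_\iota c_\iota x_\iota$. Assume the standing enumeration (S) of the eigenvalues $\{\lambda_n,\bar\lambda_n\}$ of $A$ given in the context, and let $G$ be the diagonal operator $G(q,p)=(G_1q,G_2p)$, $G_1=\mathrm{diag}(\bar\lambda_1,\bar\lambda_2,\dots)$, $G_2=\mathrm{diag}(\lambda_1,\lambda_2,\dots)$ on its natural domain. Assume (A2): there is $\kappa>0$ with $\omega_{j+1}-\omega_j\ge\kappa$ for all $j$; and (A3): there are $\alpha>0$, $\beta>0$, $k_0\in\mathbb N$ with $|c_k|\omega_k^{\alpha/2}\ge\beta$ for all $k\ge k_0$. Then $$\|R(is;G)\|=\|(G-isI)^{-1}\|=O(|s|^\alpha)\quad\text{as } |s|\to\infty,\ s\in\mathbb R.$$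
   Context: Standing enumeration (S): $f(\lambda)=\sum_j\frac{c_j^2}{\omega_j}\big(\frac1{\lambda-i\omega_j}-\frac1{\lambda+i\omega_j}\big)+\frac{2i}{\gamma\lambda}$; the eigenvalues of $A$ are pairwise distinct simple zeros of $f$ forming the set $\{\lambda_n,\bar\lambda_n:n\in\mathbb N\}$, with $\lambda_n$ in a neighbourhood of $i\omega_n$ and $\bar\lambda_n$ near $-i\omega_n$, none purely imaginary; and for every $k$ (with $\omega_k>1$, $\omega_{k+1}-\omega_k>\omega_k-\omega_{k-1}$ for $k\ge2$), with $F_k(\lambda)=(\lambda-i\omega_k)f(\lambda)$, $\lambda_k^*=i\omega_k-F_k(i\omega_k)/F_k'(i\omega_k)$, $\rho_k$ defined by $F_k(\lambda)=F_k(i\omega_k)+(\lambda-i\omega_k)F_k'(i\omega_k)+(\lambda-i\omega_k)^2\rho_k(\lambda)$, there are $0<R_1^{(k)}<\omega_k-\omega_{k-1}$ and $R_k>0$ such that $M_k=\sup_{|\lambda-i\omega_k|\le R_1^{(k)}}|\rho_k|$ satisfies $0<M_k<\frac{\gamma\omega_k|F_k'(i\omega_k)|^3}{c_k^2(\gamma\omega_k|F_k'(i\omega_k)|+1)^2}$, $\sqrt{R_k}\in(b_k-\sqrt{b_k^2-d_k},b_k+\sqrt{b_k^2-d_k})$ ($b_k=\sqrt{|F_k'(i\omega_k)|/(4M_k)}$, $d_k=|F_k(i\omega_k)/F_k'(i\omega_k)|$), $R_k\le\frac12|\mathrm{Re}\lambda_k^*|$, $\{|\lambda-\lambda_k^*|<R_k\}\subset\{|\lambda-i\omega_k|\le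 R_1^{(k)}\}$, and $\lambda_k$ is the zero of $f$ in $\{|\lambda-\lambda_k^*|<R_k\}$. *)

theory Defs
  imports "HOL-Analysis.Analysis"
begin

text \<open>Indexing convention: the paper's index j = 1,2,... corresponds to the
Isabelle index j-1 = 0,1,...  Sequences are functions nat => _.\<close>

definition l2 :: "(nat \<Rightarrow> complex) \<Rightarrow> bool" where
  "l2 x \<longleftrightarrow> summable (\<lambda>j. (cmod (x j))\<^sup>2)"

definition normH :: "(nat \<Rightarrow> complex) \<Rightarrow> (nat \<Rightarrow> complex) \<Rightarrow> real" where
  "normH q p = sqrt ((\<Sum>j. (cmod (q j))\<^sup>2) + (\<Sum>j. (cmod (p j))\<^sup>2))"

definition checkA :: "(nat \<Rightarrow> real) \<Rightarrow> real \<Rightarrow> (nat \<Rightarrow> complex) \<Rightarrow> nat \<Rightarrow> complex" where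
  "checkA c \<gamma> x j = - of_real (\<gamma> / 2 * c j) * (\<Sum>i. of_real (c i) * x i)"

definition domA :: "(nat \<Rightarrow> real) \<Rightarrow> (nat \<Rightarrow> complex) \<Rightarrow> (nat \<Rightarrow> complex) \<Rightarrow> bool" where
  "domA \<omega> q p \<longleftrightarrow> l2 q \<and> l2 p \<and> l2 (\<lambda>j. of_real (\<omega> j) * q j) \<and> l2 (\<lambda>j. of_real (\<omega> j) * p j)"

definition opA :: "(nat \<Rightarrow> real) \<Rightarrow> (nat \<Rightarrow> real) \<Rightarrow> real \<Rightarrow>
    (nat \<Rightarrow> complex) \<Rightarrow> (nat \<Rightarrow> complex) \<Rightarrow> (nat \<Rightarrow> complex) \<times> (nat \<Rightarrow> complex)" where
  "opA c \<omega> \<gamma> q p =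
     ((\<lambda>j. - \<i> * of_real (\<omega> j) * q j + checkA c \<gamma> q j + checkA c \<gamma> p j),
      (\<lambda>j. checkA c \<gamma> q j + \<i> * of_real (\<omega> j) * p j + checkA c \<gamma> p j))"

definition eigenvalue_A :: "(nat \<Rightarrow> real) \<Rightarrow> (nat \<Rightarrow> real) \<Rightarrow> real \<Rightarrow> complex \<Rightarrow> bool" where
  "eigenvalue_A c \<omega> \<gamma> \<mu> \<longleftrightarrow>
     (\<exists>q p. domA \<omega> q p \<and> (q \<noteq> (\<lambda>_. 0) \<or> p \<noteq> (\<lambda>_. 0)) \<and>
            opA c \<omega> \<gamma> q p = ((\<lambda>j. \<mu> * q j), (\<lambda>j. \<mu> * p j)))"

definition fterm :: "(nat \<Rightarrow> real) \<Rightarrow> (nat \<Rightarrow> real) \<Rightarrow> nat \<Rightarrow> complex \<Rightarrow> complex" where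
  "fterm c \<omega> j z = of_real ((c j)\<^sup>2 / \<omega> j) *
      (1 / (z - \<i> * of_real (\<omega> j)) - 1 / (z + \<i> * of_real (\<omega> j)))"

definition fS :: "(nat \<Rightarrow> real) \<Rightarrow> (nat \<Rightarrow> real) \<Rightarrow> real \<Rightarrow> complex \<Rightarrow> complex" where
  "fS c \<omega> \<gamma> z = (\<Sum>j. fterm c \<omega> j z) + 2 * \<i> / (of_real \<gamma> * z)"

text \<open>F_k(z) = (z - i omega_k) f(z), written in its analytically continued form
(so that it is also correct at z = i omega_k, where f has a pole).\<close>
definition FS :: "(nat \<Rightarrow> real) \<Rightarrow> (nat \<Rightarrow> real) \<Rightarrow> real \<Rightarrow> nat \<Rightarrow> complex \<Rightarrow> complex" where
  "FS c \<omega> \<gamma> k z =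
     of_real ((c k)\<^sup>2 / \<omega> k) * (1 - (z - \<i> * of_real (\<omega> k)) / (z + \<i> * of_real (\<omega> k)))
     + (z - \<i> * of_real (\<omega> k)) *
         ((\<Sum>j. if j = k then 0 else fterm c \<omega> j z) + 2 * \<i> / (of_real \<gamma> * z))"

definition FSd :: "(nat \<Rightarrow> real) \<Rightarrow> (nat \<Rightarrow> real) \<Rightarrow> real \<Rightarrow> nat \<Rightarrow> complex" where
  "FSd c \<omega> \<gamma> k = deriv (FS c \<omega> \<gamma> k) (\<i> * of_real (\<omega> k))"

definition lamstar :: "(nat \<Rightarrow> real) \<Rightarrow> (nat \<Rightarrow> real) \<Rightarrow> real \<Rightarrow> nat \<Rightarrow> complex" where
  "lamstar c \<omega> \<gamma> k = \<i> * of_real (\<omega> k) - FS c \<omega> \<gamma> k (\<i> * of_real (\<omega> k)) / FSd c \<omega> \<gamma> k"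

definition rhoS :: "(nat \<Rightarrow> real) \<Rightarrow> (nat \<Rightarrow> real) \<Rightarrow> real \<Rightarrow> nat \<Rightarrow> complex \<Rightarrow> complex" where
  "rhoS c \<omega> \<gamma> k z =
     (if z = \<i> * of_real (\<omega> k) then deriv (deriv (FS c \<omega> \<gamma> k)) (\<i> * of_real (\<omega> k)) / 2
      else (FS c \<omega> \<gamma> k z - FS c \<omega> \<gamma> k (\<i> * of_real (\<omega> k))
              - (z - \<i> * of_real (\<omega> k)) * FSd c \<omega> \<gamma> k) / (z - \<i> * of_real (\<omega> k))\<^sup>2)"

text \<open>The quantitative localisation condition of (S) for the index k
(paper's convention omega_0 := 0 for the first index).\<close>
definition S_local :: "(nat \<Rightarrow> real) \<Rightarrow> (nat \<Rightarrow> real) \<Rightarrow> real \<Rightarrow> (nat \<Rightarrow> complex) \<Rightarrow> nat \<Rightarrow> bool" where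
  "S_local c \<omega> \<gamma> lam k \<longleftrightarrow>
    (\<exists>R1 R. 0 < R1 \<and> R1 < \<omega> k - (if k = 0 then 0 else \<omega> (k - 1)) \<and> 0 < R \<and>
      (let Fd = FSd c \<omega> \<gamma> k;
           M = (SUP z\<in>cball (\<i> * of_real (\<omega> k)) R1. cmod (rhoS c \<omega> \<gamma> k z));
           b = sqrt (cmod Fd / (4 * M));
           d = cmod (FS c \<omega> \<gamma> k (\<i> * of_real (\<omega> k)) / Fd);
           ls = lamstar c \<omega> \<gamma> k
       in 0 < M \<and>
          M < \<gamma> * \<omega> k * (cmod Fd) ^ 3 / ((c k)\<^sup>2 * (\<gamma> * \<omega> k * cmod Fd + 1)\<^sup>2) \<and>
          b - sqrt (b\<^sup>2 - d) < sqrt R \<and> sqrt R < b + sqrt (b\<^sup>2 - d) \<and>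
          R \<le> \<bar>Re ls\<bar> / 2 \<and>
          ball ls R \<subseteq> cball (\<i> * of_real (\<omega> k)) R1 \<and>
          lam k \<in> ball ls R \<and> fS c \<omega> \<gamma> (lam k) = 0 \<and>
          (\<forall>z\<in>ball ls R. fS c \<omega> \<gamma> z = 0 \<longrightarrow> z = lam k)))"

text \<open>Resolvent of the diagonal operator G = diag(conj lambda_n) x diag(lambda_n)
at mu: (G - mu I)^{-1} acts diagonally with the reciprocal entries.\<close>
definition resolvG :: "(nat \<Rightarrow> complex) \<Rightarrow> complex \<Rightarrow> (nat \<Rightarrow> complex) \<Rightarrow> (nat \<Rightarrow> complex)
    \<Rightarrow> (nat \<Rightarrow> complex) \<times> (nat \<Rightarrow> complex)" where
  "resolvG lam \<mu> q p = ((\<lambda>n. q n / (cnj (lam n) - \<mu>)), (\<lambda>n. p n / (lam n - \<mu>)))"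

end

theory Submission
  imports Defs
begin

text \<open>Since \<open>G\<close> is diagonal, the norm of \<open>(G - is)\<^sup>-\<^sup>1\<close> is the reciprocal of the distance
from \<open>is\<close> to the eigenvalues \<open>\<lambda>\<^sub>n\<close>, \<open>cnj \<lambda>\<^sub>n\<close>. Near \<open>i\<omega>\<^sub>k\<close> the function \<open>F\<^sub>k\<close> is an explicit
rational function plus \<open>(z - i\<omega>\<^sub>k)\<close> times the remaining terms of \<open>f\<close>, which the gap
condition (A2) keeps continuous there; hence \<open>F\<^sub>k'(i\<omega>\<^sub>k)\<close> has real part \<open>2/(\<gamma>\<omega>\<^sub>k)\<close> and
imaginary part \<open>O(1/\<omega>\<^sub>k)\<close>. So the Newton point \<open>\<lambda>\<^sub>k\<^sup>*\<close> lies within \<open>O(c\<^sub>k\<^sup>2)\<close> of \<open>i\<omega>\<^sub>k\<close>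
with \<open>|Re \<lambda>\<^sub>k\<^sup>*| \<ge> const c\<^sub>k\<^sup>2\<close>, and by (S) so does \<open>\<lambda>\<^sub>k\<close>. For large \<open>|s|\<close>, either
\<open>\<omega>\<^sub>n\<close> exceeds \<open>|s|\<close> by more than that bounded shift, and then \<open>|\<lambda>\<^sub>n - is| \<ge> 1\<close>, or
\<open>\<omega>\<^sub>n = O(|s|)\<close> and \<open>|\<lambda>\<^sub>n - is| \<ge> |Re \<lambda>\<^sub>n| \<ge> const c\<^sub>n\<^sup>2 \<ge> const \<omega>\<^sub>n\<^sup>-\<^sup>\<alpha>\<close> by (A3).\<close>

lemma gap_le_abs_diff:
  fixes \<omega> :: "nat \<Rightarrow> real"
  assumes gap: "\<forall>j. \<omega> (j + 1) - \<omega> j \<ge> \<kappa>" and "0 \<le> \<kappa>" and "j \<noteq> k"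
  shows "\<kappa> \<le> \<bar>\<omega> j - \<omega> k\<bar>"
proof -
  have "\<omega> a + \<kappa> \<le> \<omega> b" if "a < b" for a b
    using Suc_leI[OF that]
  proof (induction b rule: dec_induct)
    case base
    show ?case using gap[rule_format, of a] by simp
  next
    case (step b)
    then show ?case using gap[rule_format, of b] \<open>0 \<le> \<kappa>\<close> by simp
  qed
  from this[of j k] this[of k j] \<open>j \<noteq> k\<close> show ?thesis
    by (cases "j < k") auto
qed

lemma gap_mult_le_abs_diff_squares:
  fixes x y \<kappa> :: real
  assumes "\<kappa> \<le> \<bar>x - y\<bar>" "0 \<le> \<kappa>" "0 < x" "0 < y"
  shows "\<kappa> * y \<le> \<bar>x\<^sup>2 - y\<^sup>2\<bar>"
proof -
  have "\<bar>x\<^sup>2 - y\<^sup>2\<bar> = \<bar>x - y\<bar> * (x + y)"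
    using assms by (simp add: power2_eq_square abs_mult square_diff_square_factored)
  then show ?thesis
    using assms by (simp add: mult_mono)
qed

lemma square_le_suminf:
  fixes c :: "nat \<Rightarrow> real"
  assumes "summable (\<lambda>j. (c j)\<^sup>2)"
  shows "(c k)\<^sup>2 \<le> (\<Sum>j. (c j)\<^sup>2)"
  using sum_le_suminf[OF assms, of "{k}"] by simp

lemma uniform_lower_bound:
  fixes g :: "nat \<Rightarrow> real"
  assumes "\<forall>n. 0 < g n" "\<forall>n\<ge>k0. b \<le> g n" "0 < b"
  shows "\<exists>b0>0. \<forall>n. b0 \<le> g n"
proof -
  define B where "B = insert b (g ` {..<k0})"
  have "finite B" "\<forall>x\<in>B. 0 < x"
    using assms by (auto simp: B_def)
  then have "0 < Min B"
    by (simp add: B_def)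
  moreover have "Min B \<le> g n" for n
  proof (cases "n < k0")
    case False
    then have "b \<le> g n"
      using assms(2) by simp
    moreover have "Min B \<le> b"
      using \<open>finite B\<close> by (simp add: B_def)
    ultimately show ?thesis
      by linarith
  qed (use \<open>finite B\<close> in \<open>simp add: B_def\<close>)
  ultimately show ?thesis
    by blast
qed

lemma squares_powr_bounded_below:
  fixes \<omega> c :: "nat \<Rightarrow> real"
  assumes "\<forall>j. c j \<noteq> 0" "\<forall>j. 0 < \<omega> j" "0 < \<beta>"
    and decay: "\<forall>k\<ge>k0. \<bar>c k\<bar> * \<omega> k powr (\<alpha> / 2) \<ge> \<beta>"
  shows "\<exists>\<beta>0>0. \<forall>n. \<beta>0 \<le> (c n)\<^sup>2 * \<omega> n powr \<alpha>"
proof (rule uniform_lower_bound)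
  show "\<forall>n. 0 < (c n)\<^sup>2 * \<omega> n powr \<alpha>"
    using assms by (metis powr_gt_zero zero_less_power2 mult_pos_pos less_irrefl)
  show "\<forall>k\<ge>k0. \<beta>\<^sup>2 \<le> (c k)\<^sup>2 * \<omega> k powr \<alpha>"
  proof (intro allI impI)
    fix k
    assume "k0 \<le> k"
    then have "\<beta>\<^sup>2 \<le> (\<bar>c k\<bar> * \<omega> k powr (\<alpha> / 2))\<^sup>2"
      using decay \<open>0 < \<beta>\<close> by (intro power_mono) auto
    also have "\<dots> = (c k)\<^sup>2 * (\<omega> k powr (\<alpha> / 2) * \<omega> k powr (\<alpha> / 2))"
      by (simp add: power_mult_distrib power2_eq_square)
    also have "\<omega> k powr (\<alpha> / 2) * \<omega> k powr (\<alpha> / 2) = \<omega> k powr \<alpha>"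
      by (simp flip: powr_add)
    finally show "\<beta>\<^sup>2 \<le> (c k)\<^sup>2 * \<omega> k powr \<alpha>" .
  qed
  show "0 < \<beta>\<^sup>2"
    using \<open>0 < \<beta>\<close> by simp
qed

lemma norm_real_divide_le:
  fixes w :: complex
  assumes "0 < Re w" "0 \<le> m"
  shows "cmod (of_real m / w) \<le> m / Re w"
  using assms abs_Re_le_cmod[of w] by (simp add: norm_divide frac_le)

lemma abs_Re_real_divide_ge:
  fixes w :: complex
  assumes "0 < Re w" "\<bar>Im w\<bar> \<le> Q" "0 \<le> m"
  shows "m * Re w / ((Re w)\<^sup>2 + Q\<^sup>2) \<le> \<bar>Re (of_real m / w)\<bar>"
proof -
  have "(Im w)\<^sup>2 \<le> Q\<^sup>2"
    using assms(2) by (metis abs_ge_zero power2_abs power_mono)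
  then have "m * Re w / ((Re w)\<^sup>2 + Q\<^sup>2) \<le> m * Re w / ((Re w)\<^sup>2 + (Im w)\<^sup>2)"
    using assms by (intro divide_left_mono) (auto intro!: mult_pos_pos add_pos_nonneg)
  also have "\<dots> = \<bar>Re (of_real m / w)\<bar>"
    using assms by (simp add: Re_divide abs_mult power2_eq_square)
  finally show ?thesis .
qed

lemma dist_imag_point_lower_bound:
  fixes \<mu> :: complex and s \<omega> x \<beta>0 K D \<alpha> :: real
  assumes "1 \<le> \<bar>s\<bar>" "0 < \<alpha>" "0 < \<omega>" "0 \<le> D" "0 < K" "0 < \<beta>0"
    and Re: "x / K \<le> \<bar>Re \<mu>\<bar>" and Im: "\<bar>Im \<mu> - \<omega>\<bar> \<le> D" and x: "\<beta>0 \<le> x * \<omega> powr \<alpha>"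
  shows "min 1 (\<beta>0 / (K * (2 + D) powr \<alpha>)) / \<bar>s\<bar> powr \<alpha> \<le> cmod (\<mu> - \<i> * of_real s)"
proof (cases "1 + D + \<bar>s\<bar> \<le> \<omega>")
  case True
  have "1 \<le> \<bar>s\<bar> powr \<alpha>"
    using assms by (simp add: ge_one_powr_ge_zero)
  then have "min 1 (\<beta>0 / (K * (2 + D) powr \<alpha>)) / \<bar>s\<bar> powr \<alpha> \<le> 1"
    by (simp add: divide_le_eq min_le_iff_disj)
  also have "1 \<le> \<bar>Im (\<mu> - \<i> * of_real s)\<bar>"
    using True Im by simp
  also have "\<dots> \<le> cmod (\<mu> - \<i> * of_real s)"
    by (rule abs_Im_le_cmod)
  finally show ?thesis .
next
  case False
  have "0 < x * \<omega> powr \<alpha>"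
    using x \<open>0 < \<beta>0\<close> by linarith
  then have "0 < x"
    using \<open>0 < \<omega>\<close> by (simp add: zero_less_mult_iff)
  from False have "\<omega> \<le> (2 + D) * \<bar>s\<bar>"
    using assms mult_left_mono[of 1 "\<bar>s\<bar>" D] by (simp add: algebra_simps)
  then have "\<omega> powr \<alpha> \<le> (2 + D) powr \<alpha> * \<bar>s\<bar> powr \<alpha>"
    using assms by (simp add: powr_mono2 flip: powr_mult)
  then have "\<beta>0 \<le> x * ((2 + D) powr \<alpha> * \<bar>s\<bar> powr \<alpha>)"
    using x \<open>0 < x\<close> by (meson less_imp_le mult_left_mono order_trans)
  then have "\<beta>0 / (K * (2 + D) powr \<alpha>) / \<bar>s\<bar> powr \<alpha> \<le> x / K"
    using assms by (simp add: divide_simps mult_ac)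
  also have "\<dots> \<le> cmod (\<mu> - \<i> * of_real s)"
    using Re abs_Re_le_cmod[of "\<mu> - \<i> * of_real s"] by simp
  finally show ?thesis
    using \<open>1 \<le> \<bar>s\<bar>\<close> by (smt (verit) divide_right_mono min.cobounded2 powr_ge_zero)
qed

lemma l2_divide_bounded_below:
  fixes q d :: "nat \<Rightarrow> complex"
  assumes "l2 q" and d: "\<forall>n. e \<le> cmod (d n)" and "0 < e"
  shows "l2 (\<lambda>n. q n / d n)"
    and "(\<Sum>n. (cmod (q n / d n))\<^sup>2) \<le> (\<Sum>n. (cmod (q n))\<^sup>2) / e\<^sup>2"
proof -
  have q: "summable (\<lambda>n. (cmod (q n))\<^sup>2)"
    using \<open>l2 q\<close> by (simp add: l2_def)
  have le: "(cmod (q n / d n))\<^sup>2 \<le> (cmod (q n))\<^sup>2 / e\<^sup>2" for n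
  proof -
    have "cmod (q n / d n) \<le> cmod (q n) / e"
      using d \<open>0 < e\<close> by (simp add: norm_divide frac_le)
    then show ?thesis
      by (simp add: power_mono flip: power_divide)
  qed
  have majorant: "summable (\<lambda>n. (cmod (q n))\<^sup>2 / e\<^sup>2)"
    using q by (rule summable_divide)
  then have quotient: "summable (\<lambda>n. (cmod (q n / d n))\<^sup>2)"
    by (rule summable_comparison_test'[where N = 0]) (use le in simp)
  then show "l2 (\<lambda>n. q n / d n)"
    by (simp add: l2_def)
  show "(\<Sum>n. (cmod (q n / d n))\<^sup>2) \<le> (\<Sum>n. (cmod (q n))\<^sup>2) / e\<^sup>2"
    using suminf_le[OF le quotient majorant] suminf_divide[OF q] by simp
qed

lemma resolvG_bounded:
  assumes "l2 q" "l2 p" "0 < e"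
    and dist: "\<forall>n. e \<le> cmod (lam n - \<mu>)" and dist_cnj: "\<forall>n. e \<le> cmod (cnj (lam n) - \<mu>)"
  shows "l2 (fst (resolvG lam \<mu> q p))" "l2 (snd (resolvG lam \<mu> q p))"
    and "normH (fst (resolvG lam \<mu> q p)) (snd (resolvG lam \<mu> q p)) \<le> normH q p / e"
proof -
  note Q = l2_divide_bounded_below[OF \<open>l2 q\<close> dist_cnj \<open>0 < e\<close>]
  note P = l2_divide_bounded_below[OF \<open>l2 p\<close> dist \<open>0 < e\<close>]
  show "l2 (fst (resolvG lam \<mu> q p))" "l2 (snd (resolvG lam \<mu> q p))"
    using Q(1) P(1) by (simp_all add: resolvG_def)
  have "normH (fst (resolvG lam \<mu> q p)) (snd (resolvG lam \<mu> q p))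
      \<le> sqrt (((\<Sum>n. (cmod (q n))\<^sup>2) + (\<Sum>n. (cmod (p n))\<^sup>2)) / e\<^sup>2)"
    unfolding normH_def resolvG_def fst_conv snd_conv add_divide_distrib
    using Q(2) P(2) by (intro real_sqrt_le_mono add_mono)
  also have "\<dots> = normH q p / e"
    using \<open>0 < e\<close> by (simp add: normH_def real_sqrt_divide)
  finally show "normH (fst (resolvG lam \<mu> q p)) (snd (resolvG lam \<mu> q p)) \<le> normH q p / e" .
qed

definition fS_rest :: "(nat \<Rightarrow> real) \<Rightarrow> (nat \<Rightarrow> real) \<Rightarrow> nat \<Rightarrow> complex \<Rightarrow> complex" where
  "fS_rest c \<omega> k z = (\<Sum>j. if j = k then 0 else fterm c \<omega> j z)"

lemma norm_fterm_le:
  assumes "1 < \<omega> j" and "0 < \<kappa>" and "\<kappa>/2 \<le> cmod (z - \<i> * of_real (\<omega> j))" and "0 \<le> Im z"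
  shows "cmod (fterm c \<omega> j z) \<le> (c j)\<^sup>2 * (2/\<kappa> + 1)"
proof -
  have "\<omega> j \<le> \<bar>Im (z + \<i> * of_real (\<omega> j))\<bar>"
    using assms by simp
  then have "\<omega> j \<le> cmod (z + \<i> * of_real (\<omega> j))"
    using abs_Im_le_cmod order_trans by blast
  then have "cmod (1 / (z + \<i> * of_real (\<omega> j))) \<le> 1"
    using assms by (simp add: norm_divide divide_simps)
  moreover have "cmod (1 / (z - \<i> * of_real (\<omega> j))) \<le> 2/\<kappa>"
    using assms by (simp add: norm_divide divide_simps)
  ultimately have "cmod (1 / (z - \<i> * of_real (\<omega> j)) - 1 / (z + \<i> * of_real (\<omega> j))) \<le> 2/\<kappa> + 1"
    by (smt (verit) norm_triangle_ineq4)
  moreover have "\<bar>(c j)\<^sup>2 / \<omega> j\<bar> \<le> (c j)\<^sup>2"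
    using assms by (simp add: divide_le_eq mult_le_cancel_left1)
  ultimately show ?thesis
    unfolding fterm_def norm_mult norm_of_real by (intro mult_mono) auto
qed

lemma isCont_fS_rest:
  fixes \<omega> c :: "nat \<Rightarrow> real"
  assumes c_l2: "summable (\<lambda>j. (c j)\<^sup>2)" and om1: "\<forall>j. 1 < \<omega> j"
    and gap: "\<forall>j. \<omega> (j + 1) - \<omega> j \<ge> \<kappa>" "0 < \<kappa>"
  shows "isCont (fS_rest c \<omega> k) (\<i> * of_real (\<omega> k))"
proof -
  define S where "S = ball (\<i> * of_real (\<omega> k)) (min (\<kappa>/2) 1)"
  define h where "h = (\<lambda>j z. if j = k then 0 else fterm c \<omega> j z)"
  have near: "cmod (z - \<i> * of_real (\<omega> k)) < min (\<kappa>/2) 1" if "z \<in> S" for z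
    using that by (simp add: S_def dist_norm norm_minus_commute)
  have upper: "0 < Im z" if "z \<in> S" for z
    using near[OF that] abs_Im_le_cmod[of "z - \<i> * of_real (\<omega> k)"] om1[rule_format, of k]
    by simp linarith
  have far: "\<kappa>/2 \<le> cmod (z - \<i> * of_real (\<omega> j))" if "z \<in> S" "j \<noteq> k" for z j
  proof -
    have "\<kappa> \<le> \<bar>\<omega> j - \<omega> k\<bar>"
      using gap_le_abs_diff[OF gap(1)] gap(2) that(2) by simp
    also have "\<dots> = cmod ((z - \<i> * of_real (\<omega> k)) - (z - \<i> * of_real (\<omega> j)))"
      by (simp add: norm_mult flip: of_real_diff right_diff_distrib)
    also have "\<dots> \<le> cmod (z - \<i> * of_real (\<omega> k)) + cmod (z - \<i> * of_real (\<omega> j))"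
      by (rule norm_triangle_ineq4)
    finally show ?thesis using near[OF that(1)] by linarith
  qed
  have "continuous_on S (h j)" for j
  proof (cases "j = k")
    case False
    have "z - \<i> * of_real (\<omega> j) \<noteq> 0" if "z \<in> S" for z
      using far[OF that False] gap(2) by (intro notI) simp
    moreover have "z + \<i> * of_real (\<omega> j) \<noteq> 0" if "z \<in> S" for z
      using upper[OF that] om1[rule_format, of j] by (auto simp: complex_eq_iff)
    ultimately show ?thesis
      unfolding h_def fterm_def using False om1[rule_format, of j]
      by (auto intro!: continuous_intros)
  qed (simp add: h_def)
  moreover have "norm (h j z) \<le> (c j)\<^sup>2 * (2/\<kappa> + 1)" if "z \<in> S" for j z
    using norm_fterm_le[of \<omega> j \<kappa> z c] far[OF that] upper[OF that] om1 gap(2)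
    by (simp add: h_def)
  ultimately have "continuous_on S (\<lambda>z. \<Sum>j. h j z)"
    by (intro uniform_limit_theorem[OF _ Weierstrass_m_test[of S h "\<lambda>j. (c j)\<^sup>2 * (2/\<kappa> + 1)"]])
      (auto intro!: always_eventually continuous_on_sum summable_mult2 c_l2)
  moreover have "\<i> * of_real (\<omega> k) \<in> S" "open S"
    using gap(2) by (auto simp: S_def)
  ultimately show ?thesis
    unfolding fS_rest_def h_def using continuous_on_eq_continuous_at by blast
qed

lemma FSd_eq:
  assumes cont: "isCont (fS_rest c \<omega> k) (\<i> * of_real (\<omega> k))" and "0 < \<omega> k" and "\<gamma> \<noteq> 0"
  shows "FSd c \<omega> \<gamma> k = of_real (2 / (\<gamma> * \<omega> k)) + \<i> * of_real ((c k)\<^sup>2 / (2 * (\<omega> k)\<^sup>2))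
           + fS_rest c \<omega> k (\<i> * of_real (\<omega> k))"
proof -
  define a where "a = \<i> * of_real (\<omega> k)"
  define g where "g = (\<lambda>z. fS_rest c \<omega> k z + 2 * \<i> / (of_real \<gamma> * z))"
  have "a \<noteq> 0" "a + a \<noteq> 0"
    using \<open>0 < \<omega> k\<close> by (auto simp: a_def complex_eq_iff)
  then have rational: "((\<lambda>z. of_real ((c k)\<^sup>2 / \<omega> k) * (1 - (z - a) / (z + a))) has_field_derivative
      of_real ((c k)\<^sup>2 / \<omega> k) * (- ((a + a) - (a - a)) / (a + a)\<^sup>2)) (at a)"
    using \<open>0 < \<omega> k\<close> by (auto intro!: derivative_eq_intros simp: power2_eq_square)
  have "isCont g a"
    unfolding g_def a_def using cont \<open>0 < \<omega> k\<close> \<open>\<gamma> \<noteq> 0\<close>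
    by (auto intro!: continuous_intros)
  then have factored: "((\<lambda>z. (z - a) * g z) has_field_derivative g a) (at a)"
    unfolding CARAT_DERIV by (intro exI[of _ g]) (auto simp: mult.commute)
  have split: "FS c \<omega> \<gamma> k = (\<lambda>z. of_real ((c k)\<^sup>2 / \<omega> k) * (1 - (z - a) / (z + a)) + (z - a) * g z)"
    by (simp add: fun_eq_iff FS_def fS_rest_def g_def a_def)
  have "FSd c \<omega> \<gamma> k = of_real ((c k)\<^sup>2 / \<omega> k) * (- ((a + a) - (a - a)) / (a + a)\<^sup>2) + g a"
    unfolding FSd_def a_def[symmetric] split by (intro DERIV_imp_deriv DERIV_add rational factored)
  then show ?thesis
    using \<open>0 < \<omega> k\<close> \<open>\<gamma> \<noteq> 0\<close> by (simp add: g_def a_def field_simps power2_eq_square)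
qed

lemma fterm_imag_axis:
  assumes "0 < \<omega> j" "0 < \<omega> k" "\<omega> j \<noteq> \<omega> k"
  shows "fterm c \<omega> j (\<i> * of_real (\<omega> k)) = \<i> * of_real (2 * (c j)\<^sup>2 / ((\<omega> j)\<^sup>2 - (\<omega> k)\<^sup>2))"
proof -
  have "\<omega> k - \<omega> j \<noteq> 0" "\<omega> k + \<omega> j \<noteq> 0" "(\<omega> j)\<^sup>2 - (\<omega> k)\<^sup>2 \<noteq> 0"
    using assms by (auto simp: power2_eq_square square_diff_square_factored)
  then show ?thesis
    using assms by (simp add: fterm_def complex_eq_iff field_simps power2_eq_square Re_divide Im_divide)
qed

lemma fS_rest_imag_axis:
  fixes \<omega> c :: "nat \<Rightarrow> real"
  assumes c_l2: "summable (\<lambda>j. (c j)\<^sup>2)" and om1: "\<forall>j. 1 < \<omega> j"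
    and gap: "\<forall>j. \<omega> (j + 1) - \<omega> j \<ge> \<kappa>" "0 < \<kappa>"
  shows "Re (fS_rest c \<omega> k (\<i> * of_real (\<omega> k))) = 0"
    and "cmod (fS_rest c \<omega> k (\<i> * of_real (\<omega> k))) \<le> 2 * (\<Sum>j. (c j)\<^sup>2) / (\<kappa> * \<omega> k)"
proof -
  define r where "r j = (if j = k then 0 else 2 * (c j)\<^sup>2 / ((\<omega> j)\<^sup>2 - (\<omega> k)\<^sup>2))" for j
  have r_le: "\<bar>r j\<bar> \<le> 2 / (\<kappa> * \<omega> k) * (c j)\<^sup>2" for j
  proof (cases "j = k")
    case False
    then have "\<kappa> * \<omega> k \<le> \<bar>(\<omega> j)\<^sup>2 - (\<omega> k)\<^sup>2\<bar>"
      using gap_le_abs_diff[OF gap(1)] gap(2) om1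
      by (intro gap_mult_le_abs_diff_squares) (auto intro: less_trans[OF zero_less_one])
    then show ?thesis
      using False gap(2) om1[rule_format, of k]
      by (simp add: r_def abs_mult divide_simps mult_left_mono)
  qed (use gap(2) om1[rule_format, of k] in \<open>simp add: r_def\<close>)
  have majorant: "summable (\<lambda>j. 2 / (\<kappa> * \<omega> k) * (c j)\<^sup>2)"
    using c_l2 by (rule summable_mult)
  then have abs_r: "summable (\<lambda>j. \<bar>r j\<bar>)"
    by (rule summable_comparison_test'[where N = 0]) (use r_le in simp)
  have "(\<lambda>j. if j = k then 0 else fterm c \<omega> j (\<i> * of_real (\<omega> k))) = (\<lambda>j. \<i> * of_real (r j))"
  proof
    fix j
    have "j \<noteq> k \<Longrightarrow> \<omega> j \<noteq> \<omega> k"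
      using gap_le_abs_diff[OF gap(1)] gap(2) by fastforce
    then show "(if j = k then 0 else fterm c \<omega> j (\<i> * of_real (\<omega> k))) = \<i> * of_real (r j)"
      using fterm_imag_axis[of \<omega> j k c] om1 by (auto simp: r_def intro: less_trans[OF zero_less_one])
  qed
  then have rest: "fS_rest c \<omega> k (\<i> * of_real (\<omega> k)) = \<i> * of_real (\<Sum>j. r j)"
    unfolding fS_rest_def
    using suminf_mult[OF summable_of_real[OF summable_rabs_cancel[OF abs_r]], of \<i>]
      suminf_of_real[OF summable_rabs_cancel[OF abs_r], where 'a=complex]
    by simp
  then show "Re (fS_rest c \<omega> k (\<i> * of_real (\<omega> k))) = 0"
    by simp
  have "\<bar>\<Sum>j. r j\<bar> \<le> (\<Sum>j. 2 / (\<kappa> * \<omega> k) * (c j)\<^sup>2)"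
    using summable_rabs[OF abs_r] suminf_le[OF r_le abs_r majorant] by linarith
  also have "\<dots> = 2 * (\<Sum>j. (c j)\<^sup>2) / (\<kappa> * \<omega> k)"
    using suminf_mult[OF c_l2, of "2 / (\<kappa> * \<omega> k)"] by simp
  finally show "cmod (fS_rest c \<omega> k (\<i> * of_real (\<omega> k))) \<le> 2 * (\<Sum>j. (c j)\<^sup>2) / (\<kappa> * \<omega> k)"
    by (simp add: rest norm_mult)
qed

lemma FSd_Re_Im:
  fixes \<omega> c :: "nat \<Rightarrow> real"
  assumes c_l2: "summable (\<lambda>j. (c j)\<^sup>2)" and om1: "\<forall>j. 1 < \<omega> j"
    and gap: "\<forall>j. \<omega> (j + 1) - \<omega> j \<ge> \<kappa>" "0 < \<kappa>" and "0 < \<gamma>"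
  defines "Cs \<equiv> \<Sum>j. (c j)\<^sup>2"
  shows "Re (FSd c \<omega> \<gamma> k) = 2 / (\<gamma> * \<omega> k)"
    and "\<bar>Im (FSd c \<omega> \<gamma> k)\<bar> \<le> (Cs / 2 + 2 * Cs / \<kappa>) / \<omega> k"
proof -
  have wk: "1 < \<omega> k"
    using om1 by simp
  have FSd: "FSd c \<omega> \<gamma> k = of_real (2 / (\<gamma> * \<omega> k)) + \<i> * of_real ((c k)\<^sup>2 / (2 * (\<omega> k)\<^sup>2))
      + fS_rest c \<omega> k (\<i> * of_real (\<omega> k))"
    using FSd_eq[OF isCont_fS_rest[OF c_l2 om1 gap]] wk \<open>0 < \<gamma>\<close> by simp
  show "Re (FSd c \<omega> \<gamma> k) = 2 / (\<gamma> * \<omega> k)"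
    using fS_rest_imag_axis(1)[OF c_l2 om1 gap] unfolding FSd by (simp del: of_real_divide)
  have "(c k)\<^sup>2 / (2 * (\<omega> k)\<^sup>2) \<le> Cs / (2 * \<omega> k)"
    using square_le_suminf[OF c_l2, of k] wk unfolding Cs_def
    by (intro frac_le) (auto simp: power2_eq_square intro: order_trans[OF zero_le_square])
  moreover have "\<bar>Im (fS_rest c \<omega> k (\<i> * of_real (\<omega> k)))\<bar> \<le> 2 * Cs / (\<kappa> * \<omega> k)"
    using fS_rest_imag_axis(2)[OF c_l2 om1 gap] abs_Im_le_cmod order_trans unfolding Cs_def by blast
  moreover have "0 \<le> (c k)\<^sup>2 / (2 * (\<omega> k)\<^sup>2)"
    by simp
  ultimately show "\<bar>Im (FSd c \<omega> \<gamma> k)\<bar> \<le> (Cs / 2 + 2 * Cs / \<kappa>) / \<omega> k"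
    unfolding FSd add_divide_distrib
    by (simp only: plus_complex.sel Im_complex_of_real Im_i_times Re_complex_of_real
        divide_divide_eq_left)
qed

lemma lamstar_estimates:
  fixes \<omega> c :: "nat \<Rightarrow> real"
  assumes c_l2: "summable (\<lambda>j. (c j)\<^sup>2)" and om1: "\<forall>j. 1 < \<omega> j"
    and gap: "\<forall>j. \<omega> (j + 1) - \<omega> j \<ge> \<kappa>" "0 < \<kappa>" and "0 < \<gamma>"
  defines "Cs \<equiv> \<Sum>j. (c j)\<^sup>2"
  defines "K1 \<equiv> Cs / 2 + 2 * Cs / \<kappa>"
  defines "K \<equiv> \<gamma> * (4 / \<gamma>\<^sup>2 + K1\<^sup>2)"
  shows "2 * (c k)\<^sup>2 / K \<le> \<bar>Re (lamstar c \<omega> \<gamma> k)\<bar>"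
    and "cmod (lamstar c \<omega> \<gamma> k - \<i> * of_real (\<omega> k)) \<le> \<gamma> * (c k)\<^sup>2 / 2"
proof -
  define w where "w = FSd c \<omega> \<gamma> k"
  define m where "m = (c k)\<^sup>2 / \<omega> k"
  have wk: "1 < \<omega> k"
    using om1 by simp
  note w = FSd_Re_Im[OF c_l2 om1 gap \<open>0 < \<gamma>\<close>, of k, folded w_def Cs_def, folded K1_def]
  have "0 < Re w" "0 \<le> m"
    using w(1) wk \<open>0 < \<gamma>\<close> by (simp_all add: m_def)
  have shift: "lamstar c \<omega> \<gamma> k - \<i> * of_real (\<omega> k) = - (of_real m / w)"
    by (simp add: lamstar_def FS_def m_def w_def)
  define E where "E = 4 / \<gamma>\<^sup>2 + K1\<^sup>2"
  have "0 < E"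
    using \<open>0 < \<gamma>\<close> by (simp add: E_def add_pos_nonneg)
  have "(Re w)\<^sup>2 + (K1 / \<omega> k)\<^sup>2 = E / (\<omega> k)\<^sup>2" "m * Re w = 2 * (c k)\<^sup>2 / (\<gamma> * (\<omega> k)\<^sup>2)"
    by (simp_all add: w(1) m_def E_def power_divide power_mult_distrib add_divide_distrib power2_eq_square)
      (simp add: field_simps)
  then have "m * Re w / ((Re w)\<^sup>2 + (K1 / \<omega> k)\<^sup>2) = 2 * (c k)\<^sup>2 / K"
    using wk \<open>0 < \<gamma>\<close> \<open>0 < E\<close> by (simp add: K_def flip: E_def)
  then show "2 * (c k)\<^sup>2 / K \<le> \<bar>Re (lamstar c \<omega> \<gamma> k)\<bar>"
    using abs_Re_real_divide_ge[OF \<open>0 < Re w\<close> w(2) \<open>0 \<le> m\<close>] arg_cong[OF shift, of Re] by simp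
  have "m / Re w = \<gamma> * (c k)\<^sup>2 / 2"
    using wk \<open>0 < \<gamma>\<close> by (simp add: w(1) m_def)
  moreover have "cmod (lamstar c \<omega> \<gamma> k - \<i> * of_real (\<omega> k)) = cmod (of_real m / w)"
    by (simp add: shift)
  ultimately show "cmod (lamstar c \<omega> \<gamma> k - \<i> * of_real (\<omega> k)) \<le> \<gamma> * (c k)\<^sup>2 / 2"
    using norm_real_divide_le[OF \<open>0 < Re w\<close> \<open>0 \<le> m\<close>] by linarith
qed

lemma lam_estimates:
  fixes \<omega> c :: "nat \<Rightarrow> real"
  assumes c_l2: "summable (\<lambda>j. (c j)\<^sup>2)" and om1: "\<forall>j. 1 < \<omega> j"
    and gap: "\<forall>j. \<omega> (j + 1) - \<omega> j \<ge> \<kappa>" "0 < \<kappa>" and "0 < \<gamma>"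
    and local: "S_local c \<omega> \<gamma> lam k"
  defines "Cs \<equiv> \<Sum>j. (c j)\<^sup>2"
  defines "K1 \<equiv> Cs / 2 + 2 * Cs / \<kappa>"
  defines "K \<equiv> \<gamma> * (4 / \<gamma>\<^sup>2 + K1\<^sup>2)"
  shows "(c k)\<^sup>2 / K \<le> \<bar>Re (lam k)\<bar>"
    and "cmod (lam k - \<i> * of_real (\<omega> k)) \<le> \<gamma> * (c k)\<^sup>2"
proof -
  define ls where "ls = lamstar c \<omega> \<gamma> k"
  note ls = lamstar_estimates[OF c_l2 om1 gap \<open>0 < \<gamma>\<close>, of k, folded ls_def Cs_def, folded K1_def,
      folded K_def]
  obtain R where "R \<le> \<bar>Re ls\<bar> / 2" "lam k \<in> ball ls R"
    using local unfolding S_local_def Let_def ls_def by blast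
  then have close: "cmod (lam k - ls) < \<bar>Re ls\<bar> / 2"
    by (simp add: dist_norm norm_minus_commute)
  have "\<bar>Re ls\<bar> \<le> \<bar>Re (lam k)\<bar> + cmod (lam k - ls)"
    using abs_Re_le_cmod[of "lam k - ls"] by simp
  then show "(c k)\<^sup>2 / K \<le> \<bar>Re (lam k)\<bar>"
    using close ls(1) by simp
  have "\<bar>Re ls\<bar> \<le> cmod (ls - \<i> * of_real (\<omega> k))"
    using abs_Re_le_cmod[of "ls - \<i> * of_real (\<omega> k)"] by simp
  then have "cmod (lam k - \<i> * of_real (\<omega> k)) \<le> 3 / 2 * cmod (ls - \<i> * of_real (\<omega> k))"
    using close norm_triangle_ineq[of "lam k - ls" "ls - \<i> * of_real (\<omega> k)"] by simp
  also have "\<dots> \<le> \<gamma> * (c k)\<^sup>2"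
  proof -
    have "0 \<le> \<gamma> * (c k)\<^sup>2"
      using \<open>0 < \<gamma>\<close> by simp
    then show ?thesis
      using ls(2) by linarith
  qed
  finally show "cmod (lam k - \<i> * of_real (\<omega> k)) \<le> \<gamma> * (c k)\<^sup>2" .
qed

lemma eigenvalues_far_from_imag_axis:
  fixes \<omega> c :: "nat \<Rightarrow> real"
  assumes c_l2: "summable (\<lambda>j. (c j)\<^sup>2)" and c_nz: "\<forall>j. c j \<noteq> 0" and om1: "\<forall>j. 1 < \<omega> j"
    and gap: "\<forall>j. \<omega> (j + 1) - \<omega> j \<ge> \<kappa>" "0 < \<kappa>" and "0 < \<gamma>"
    and local: "\<forall>k. S_local c \<omega> \<gamma> lam k"
    and "0 < \<alpha>" "0 < \<beta>" and decay: "\<forall>k\<ge>k0. \<bar>c k\<bar> * \<omega> k powr (\<alpha> / 2) \<ge> \<beta>"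
  shows "\<exists>m>0. \<forall>s n. 1 \<le> \<bar>s\<bar> \<longrightarrow>
           m / \<bar>s\<bar> powr \<alpha> \<le> cmod (lam n - \<i> * of_real s) \<and>
           m / \<bar>s\<bar> powr \<alpha> \<le> cmod (cnj (lam n) - \<i> * of_real s)"
proof -
  define Cs where "Cs = (\<Sum>j. (c j)\<^sup>2)"
  define K where "K = \<gamma> * (4 / \<gamma>\<^sup>2 + (Cs / 2 + 2 * Cs / \<kappa>)\<^sup>2)"
  define D where "D = \<gamma> * Cs"
  have "0 < K"
    using \<open>0 < \<gamma>\<close> by (simp add: K_def add_pos_nonneg)
  have "0 \<le> D"
    using \<open>0 < \<gamma>\<close> order_trans[OF zero_le_power2 square_le_suminf[OF c_l2]] by (simp add: D_def Cs_def)
  have est: "(c n)\<^sup>2 / K \<le> \<bar>Re (lam n)\<bar>" "\<bar>Im (lam n) - \<omega> n\<bar> \<le> D" for n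
  proof -
    note lam = lam_estimates[OF c_l2 om1 gap \<open>0 < \<gamma>\<close> local[rule_format, of n]]
    show "(c n)\<^sup>2 / K \<le> \<bar>Re (lam n)\<bar>"
      using lam(1) by (simp add: K_def Cs_def)
    have "\<bar>Im (lam n) - \<omega> n\<bar> \<le> \<gamma> * (c n)\<^sup>2"
      using lam(2) abs_Im_le_cmod[of "lam n - \<i> * of_real (\<omega> n)"] by simp
    also have "\<dots> \<le> D"
      using square_le_suminf[OF c_l2, of n] \<open>0 < \<gamma>\<close> unfolding D_def Cs_def by simp
    finally show "\<bar>Im (lam n) - \<omega> n\<bar> \<le> D" .
  qed
  obtain \<beta>0 where "0 < \<beta>0" and \<beta>0: "\<forall>n. \<beta>0 \<le> (c n)\<^sup>2 * \<omega> n powr \<alpha>"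
    using squares_powr_bounded_below[OF c_nz _ \<open>0 < \<beta>\<close> decay] om1 by (meson less_trans zero_less_one)
  define m where "m = min 1 (\<beta>0 / (K * (2 + D) powr \<alpha>))"
  have "0 < m"
    using \<open>0 < \<beta>0\<close> \<open>0 < K\<close> \<open>0 \<le> D\<close> by (simp add: m_def)
  moreover have "m / \<bar>s\<bar> powr \<alpha> \<le> cmod (lam n - \<i> * of_real s)" if "1 \<le> \<bar>s\<bar>" for s n
    unfolding m_def using om1[rule_format, of n]
    by (intro dist_imag_point_lower_bound[where \<omega> = "\<omega> n" and x = "(c n)\<^sup>2"]
        that \<open>0 < \<alpha>\<close> \<open>0 \<le> D\<close> \<open>0 < K\<close> \<open>0 < \<beta>0\<close> est \<beta>0[rule_format]) auto
  moreover have "cnj (lam n) - \<i> * of_real s = cnj (lam n - \<i> * of_real (- s))" for s n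
    by simp
  ultimately show ?thesis
    by (intro exI[of _ m]) (metis abs_minus_cancel complex_mod_cnj)
qed

theorem lemma4p1:
  fixes \<omega> c :: "nat \<Rightarrow> real" and \<gamma> \<kappa> \<alpha> \<beta> :: real and k0 :: nat
    and lam :: "nat \<Rightarrow> complex"
  assumes om_pos: "0 < \<omega> 0"
    and om_mono: "strict_mono \<omega>"
    and c_l2: "summable (\<lambda>j. (c j)\<^sup>2)"
    and c_nz: "\<forall>j. c j \<noteq> 0"
    and gamma_pos: "0 < \<gamma>"
    and S_om_gt1: "\<forall>k. \<omega> k > 1"
    and S_gaps: "\<forall>k\<ge>1. \<omega> (k + 1) - \<omega> k > \<omega> k - \<omega> (k - 1)"
    and S_eig: "{\<mu>. eigenvalue_A c \<omega> \<gamma> \<mu>} = range lam \<union> range (\<lambda>n. cnj (lam n))"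
    and S_inj: "inj lam"
    and S_distinct: "\<forall>n m. lam n \<noteq> cnj (lam m)"
    and S_zero: "\<forall>n. fS c \<omega> \<gamma> (lam n) = 0 \<and> fS c \<omega> \<gamma> (cnj (lam n)) = 0"
    and S_simple: "\<forall>n. deriv (fS c \<omega> \<gamma>) (lam n) \<noteq> 0 \<and> deriv (fS c \<omega> \<gamma>) (cnj (lam n)) \<noteq> 0"
    and S_not_imag: "\<forall>n. Re (lam n) \<noteq> 0"
    and S_local: "\<forall>k. S_local c \<omega> \<gamma> lam k"
    and A2: "0 < \<kappa>" "\<forall>j. \<omega> (j + 1) - \<omega> j \<ge> \<kappa>"
    and A3: "0 < \<alpha>" "0 < \<beta>" "\<forall>k\<ge>k0. \<bar>c k\<bar> * \<omega> k powr (\<alpha> / 2) \<ge> \<beta>"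
  shows "\<exists>C S0. \<forall>s::real. \<bar>s\<bar> \<ge> S0 \<longrightarrow>
           (\<forall>q p. l2 q \<and> l2 p \<longrightarrow>
              l2 (fst (resolvG lam (\<i> * of_real s) q p)) \<and>
              l2 (snd (resolvG lam (\<i> * of_real s) q p)) \<and>
              normH (fst (resolvG lam (\<i> * of_real s) q p)) (snd (resolvG lam (\<i> * of_real s) q p))
                \<le> C * \<bar>s\<bar> powr \<alpha> * normH q p)"
proof -
  obtain m where "0 < m" and far: "\<forall>s n. 1 \<le> \<bar>s\<bar> \<longrightarrow>
      m / \<bar>s\<bar> powr \<alpha> \<le> cmod (lam n - \<i> * of_real s) \<and>
      m / \<bar>s\<bar> powr \<alpha> \<le> cmod (cnj (lam n) - \<i> * of_real s)"
    using eigenvalues_far_from_imag_axis[OF c_l2 c_nz S_om_gt1 A2(2,1) gamma_pos S_local A3] by blast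
  show ?thesis
  proof (rule exI[of _ "1 / m"], rule exI[of _ 1], intro allI impI)
    fix s :: real and q p
    assume "1 \<le> \<bar>s\<bar>" and "l2 q \<and> l2 p"
    then have "0 < m / \<bar>s\<bar> powr \<alpha>"
      using \<open>0 < m\<close> by simp
    note resolvent = resolvG_bounded[of q p, OF _ _ this]
    have "normH q p / (m / \<bar>s\<bar> powr \<alpha>) = 1 / m * \<bar>s\<bar> powr \<alpha> * normH q p"
      by simp
    then show "l2 (fst (resolvG lam (\<i> * of_real s) q p)) \<and>
        l2 (snd (resolvG lam (\<i> * of_real s) q p)) \<and>
        normH (fst (resolvG lam (\<i> * of_real s) q p)) (snd (resolvG lam (\<i> * of_real s) q p))
          \<le> 1 / m * \<bar>s\<bar> powr \<alpha> * normH q p"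
      using resolvent \<open>l2 q \<and> l2 p\<close> far \<open>1 \<le> \<bar>s\<bar>\<close> by metis
  qed
qed

end
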